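(* Let $G$ be a $k$-degenerate graph with maximum degree $\Delta(G)$ and let $H$ be an $l$-degenerate graph. Then $G+_T H$ is $\max\{2\Delta(G),\,k+l\}$-degenerate.
   Context: A graph is $k$-degenerate if its vertices can be successively deleted so that each deleted vertex has degree at most $k$ at the time of deletion. The total graph $T(G)$ has vertex set $V(G)\cup E(G)$: it consists of $G$, together with, for each edge $e=xy$, edges $ex$ and $ey$, and edges $ee'$ whenever edges $e,e'$ are adjacent in $G$. The $T$-sum $G+_T H$ has vertex set $(V(G)\cup E(G))\times V(H)$, and $(u_1,u_2)\sim(v_1,v_2)$ iff [$u_1=v_1\in V(G)$ and $u_2v_2\in E(H)$] or [$u_2=v_2$ and $u_1v_1\in E(T(G))$]. *)

theory Defs
  imports Main
begin

definition graph :: "'a set \<Rightarrow> 'a set set \<Rightarrow> bool" where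
  "graph V E \<longleftrightarrow> finite V \<and> E \<subseteq> {{x, y} | x y. x \<in> V \<and> y \<in> V \<and> x \<noteq> y}"

definition degree_in :: "'a set \<Rightarrow> 'a set set \<Rightarrow> 'a \<Rightarrow> nat" where
  "degree_in V E v = card {u \<in> V. {u, v} \<in> E}"

definition max_degree :: "'a set \<Rightarrow> 'a set set \<Rightarrow> nat" where
  "max_degree V E = Max (insert 0 (degree_in V E ` V))"

inductive degenerate :: "nat \<Rightarrow> 'a set set \<Rightarrow> 'a set \<Rightarrow> bool" for k E where
  empty: "degenerate k E {}"
| delete: "v \<in> V \<Longrightarrow> degree_in V E v \<le> k \<Longrightarrow> degenerate k E (V - {v}) \<Longrightarrow> degenerate k E V"

definition total_V :: "'a set \<Rightarrow> 'a set set \<Rightarrow> ('a + 'a set) set" where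
  "total_V V E = Inl ` V \<union> Inr ` E"

definition total_E :: "'a set \<Rightarrow> 'a set set \<Rightarrow> ('a + 'a set) set set" where
  "total_E V E =
     {{Inl x, Inl y} | x y. {x, y} \<in> E}
   \<union> {{Inr e, Inl x} | e x. e \<in> E \<and> x \<in> e}
   \<union> {{Inr e, Inr e'} | e e'. e \<in> E \<and> e' \<in> E \<and> e \<noteq> e' \<and> e \<inter> e' \<noteq> {}}"

definition tsum_V :: "'a set \<Rightarrow> 'a set set \<Rightarrow> 'b set \<Rightarrow> 'b set set \<Rightarrow> (('a + 'a set) \<times> 'b) set" where
  "tsum_V VG EG VH EH = total_V VG EG \<times> VH"

definition tsum_E :: "'a set \<Rightarrow> 'a set set \<Rightarrow> 'b set \<Rightarrow> 'b set set \<Rightarrow> (('a + 'a set) \<times> 'b) set set" where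
  "tsum_E VG EG VH EH =
     {{(Inl v, u2), (Inl v, v2)} | v u2 v2. v \<in> VG \<and> {u2, v2} \<in> EH}
   \<union> {{(u1, w), (v1, w)} | u1 v1 w. w \<in> VH \<and> {u1, v1} \<in> total_E VG EG}"

end

theory Submission
  imports Defs
begin

text \<open>Delete first the copies (e, w) of the edges of G. Such a vertex, with e = {x, y}, is
  adjacent only to (x, w), (y, w) and to the copies (e', w) of the edges e' meeting e, so its
  degree is at most deg x + deg y \<le> 2 \<Delta>(G). What remains is the Cartesian product of G and H
  on the vertex copies (v, w). Delete it layer by layer, the layers V(G) \<times> {w} in a degeneracy
  order of H and each layer in a degeneracy order of G: when (v, w) is deleted it has at most
  k neighbours in its own layer and at most l neighbours (v, w') in the layers not yet deleted.\<close>

lemma degenerate_finite: "degenerate k E V \<Longrightarrow> finite V"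
  by (induction rule: degenerate.induct) auto

lemma degenerate_mono: "degenerate k E V \<Longrightarrow> k \<le> k' \<Longrightarrow> degenerate k' E V"
  by (induction rule: degenerate.induct) (auto intro: degenerate.intros)

lemma degree_in_mono: "finite V \<Longrightarrow> V' \<subseteq> V \<Longrightarrow> degree_in V' E v \<le> degree_in V E v"
  unfolding degree_in_def by (rule card_mono) auto

lemma degree_in_le_card_image:
  assumes "finite A" and "{u \<in> V. {u, v} \<in> E} \<subseteq> f ` A"
  shows "degree_in V E v \<le> card A"
proof -
  have "degree_in V E v \<le> card (f ` A)"
    unfolding degree_in_def using assms by (intro card_mono) auto
  also have "\<dots> \<le> card A" using assms(1) by (rule card_image_le)
  finally show ?thesis .
qed

lemma degree_le_max_degree: "finite V \<Longrightarrow> x \<in> V \<Longrightarrow> degree_in V E x \<le> max_degree V E"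
  unfolding max_degree_def by (intro Max_ge) auto

lemma degenerate_delete_set:
  assumes "finite V" and "A \<subseteq> V" and "\<forall>a\<in>A. degree_in V E a \<le> k"
    and "degenerate k E (V - A)"
  shows "degenerate k E V"
proof -
  have "finite A" using assms(1,2) by (rule finite_subset[rotated])
  then show ?thesis using assms
  proof (induction A arbitrary: V rule: finite_induct)
    case empty
    then show ?case by simp
  next
    case (insert a A)
    have "a \<in> V" "degree_in V E a \<le> k" using insert.prems(2,3) by simp_all
    moreover have "degenerate k E (V - {a})"
    proof (rule insert.IH)
      show "finite (V - {a})" using insert.prems(1) by simp
      show "A \<subseteq> V - {a}" using insert.prems(2) insert.hyps(2) by blast
      show "\<forall>b\<in>A. degree_in (V - {a}) E b \<le> k"
      proof
        fix b assume "b \<in> A"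
        then have "degree_in V E b \<le> k" using insert.prems(3) by simp
        moreover have "degree_in (V - {a}) E b \<le> degree_in V E b"
          using insert.prems(1) by (rule degree_in_mono) blast
        ultimately show "degree_in (V - {a}) E b \<le> k" by simp
      qed
      have "V - {a} - A = V - insert a A" by blast
      then show "degenerate k E (V - {a} - A)" using insert.prems(4) by simp
    qed
    ultimately show ?case by (rule degenerate.delete[of a])
  qed
qed

lemma graph_finite_edges: "graph V E \<Longrightarrow> finite E"
  unfolding graph_def by (auto intro: finite_subset[of E "Pow V"])

lemma card_incident_edges_le_degree:
  assumes "graph V E"
  shows "card {e \<in> E. x \<in> e} \<le> degree_in V E x"
proof -
  have "finite V" using assms unfolding graph_def by simp
  moreover have "{e \<in> E. x \<in> e} \<subseteq> (\<lambda>u. {u, x}) ` {u \<in> V. {u, x} \<in> E}"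
    using assms unfolding graph_def by (fastforce simp: insert_commute)
  ultimately show ?thesis
    unfolding degree_in_def by (intro surj_card_le) auto
qed

lemma card_adjacent_edges_le:
  assumes g: "graph V E" and e: "e \<in> E" "e = {x, y}"
  shows "card {e' \<in> E. e' \<noteq> e \<and> e' \<inter> e \<noteq> {}} + 2 \<le> degree_in V E x + degree_in V E y"
proof -
  define Ix where "Ix = {e' \<in> E. x \<in> e'}"
  define Iy where "Iy = {e' \<in> E. y \<in> e'}"
  have fin: "finite Ix" "finite Iy"
    using graph_finite_edges[OF g] unfolding Ix_def Iy_def by auto
  have "e \<in> Ix" "e \<in> Iy" using e unfolding Ix_def Iy_def by auto
  then have "card (Ix - {e}) + 1 = card Ix" "card (Iy - {e}) + 1 = card Iy"
    using fin by (metis card_Suc_Diff1 Suc_eq_plus1)+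
  moreover have "{e' \<in> E. e' \<noteq> e \<and> e' \<inter> e \<noteq> {}} = (Ix - {e}) \<union> (Iy - {e})"
    using e unfolding Ix_def Iy_def by auto
  then have "card {e' \<in> E. e' \<noteq> e \<and> e' \<inter> e \<noteq> {}} \<le> card (Ix - {e}) + card (Iy - {e})"
    by (simp add: card_Un_le)
  moreover have "card Ix \<le> degree_in V E x" "card Iy \<le> degree_in V E y"
    unfolding Ix_def Iy_def using card_incident_edges_le_degree[OF g] by auto
  ultimately show ?thesis by linarith
qed

lemma total_E_InlD: "{Inl a, Inl b} \<in> total_E V E \<Longrightarrow> {a, b} \<in> E"
  unfolding total_E_def by (auto simp: doubleton_eq_iff insert_commute)

lemma total_E_InrD:
  "{z, Inr e} \<in> total_E V E \<Longrightarrow> z \<in> Inl ` e \<union> Inr ` {e' \<in> E. e' \<noteq> e \<and> e' \<inter> e \<noteq> {}}"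
  unfolding total_E_def by (auto simp: doubleton_eq_iff)

lemma tsum_E_cases:
  assumes "{u, (z, w)} \<in> tsum_E VG EG VH EH"
  obtains (fibre) a w' where "z = Inl a" "u = (Inl a, w')" "{w', w} \<in> EH"
    | (layer) z' where "u = (z', w)" "{z', z} \<in> total_E VG EG"
  using assms unfolding tsum_E_def by (auto simp: doubleton_eq_iff insert_commute)

lemma tsum_E_Inl_InlD:
  assumes "{(Inl v', w'), (Inl v, w)} \<in> tsum_E VG EG VH EH"
  shows "(v' = v \<and> {w', w} \<in> EH) \<or> (w' = w \<and> {v', v} \<in> EG)"
  using assms by (cases rule: tsum_E_cases) (auto dest: total_E_InlD)

lemma degree_edge_copy_le:
  fixes VG :: "'a set"
  assumes g: "graph VG EG" and e: "e \<in> EG"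
  shows "degree_in (tsum_V VG EG VH EH) (tsum_E VG EG VH EH) (Inr e, w) \<le> 2 * max_degree VG EG"
proof -
  obtain x y where xy: "e = {x, y}" "x \<in> VG" "y \<in> VG"
    using g e unfolding graph_def by blast
  let ?A = "{e' \<in> EG. e' \<noteq> e \<and> e' \<inter> e \<noteq> {}}"
  have "finite ?A" using graph_finite_edges[OF g] by simp
  have "{u \<in> tsum_V VG EG VH EH. {u, (Inr e, w)} \<in> tsum_E VG EG VH EH}
      \<subseteq> (\<lambda>z. (z, w)) ` (Inl ` e \<union> Inr ` ?A)"
    by (auto elim: tsum_E_cases dest!: total_E_InrD)
  then have "degree_in (tsum_V VG EG VH EH) (tsum_E VG EG VH EH) (Inr e, w)
      \<le> card (Inl ` e \<union> Inr ` ?A)"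
    by (intro degree_in_le_card_image) (use \<open>finite ?A\<close> xy in auto)
  also have "\<dots> \<le> card (Inl ` e :: ('a + 'a set) set) + card (Inr ` ?A :: ('a + 'a set) set)"
    by (rule card_Un_le)
  also have "\<dots> \<le> 2 + card ?A"
  proof (rule add_mono)
    show "card (Inl ` e :: ('a + 'a set) set) \<le> 2" using xy(1) by (simp add: card_insert_if)
    show "card (Inr ` ?A :: ('a + 'a set) set) \<le> card ?A" using \<open>finite ?A\<close> by (rule card_image_le)
  qed
  also have "\<dots> \<le> degree_in VG EG x + degree_in VG EG y"
    using card_adjacent_edges_le[OF g e xy(1)] by simp
  also have "\<dots> \<le> 2 * max_degree VG EG"
  proof -
    have "finite VG" using g unfolding graph_def by simp
    then have "degree_in VG EG x \<le> max_degree VG EG" "degree_in VG EG y \<le> max_degree VG EG"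
      using xy(2,3) by (simp_all add: degree_le_max_degree)
    then show ?thesis by simp
  qed
  finally show ?thesis .
qed

lemma vertex_copies_layer_degenerate:
  fixes VG :: "'a set" and VH :: "'b set"
  assumes "degenerate k EG U" and "finite W" and "w \<in> W" and "degree_in W EH w \<le> l"
    and "degenerate (k + l) (tsum_E VG EG VH EH) (Inl ` VG \<times> (W - {w}))"
  shows "degenerate (k + l) (tsum_E VG EG VH EH) (Inl ` U \<times> {w} \<union> Inl ` VG \<times> (W - {w}))"
  using assms
proof (induction rule: degenerate.induct)
  case empty
  then show ?case by simp
next
  case (delete v U)
  let ?T = "tsum_E VG EG VH EH"
  let ?S = "Inl ` U \<times> {w} \<union> Inl ` VG \<times> (W - {w})"
  let ?NG = "{v' \<in> U. {v', v} \<in> EG}" and ?NH = "{w' \<in> W. {w', w} \<in> EH}"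
  let ?N = "(\<lambda>v'. (Inl v', w) :: ('a + 'a set) \<times> 'b) ` ?NG \<union> (\<lambda>w'. (Inl v, w')) ` ?NH"
  have "finite U" using degenerate_finite[OF delete.hyps(3)] by simp
  have "{u \<in> ?S. {u, (Inl v, w)} \<in> ?T} \<subseteq> ?N"
    using \<open>w \<in> W\<close> by (auto dest: tsum_E_Inl_InlD)
  then have "degree_in ?S ?T (Inl v, w) \<le> card ?N"
    unfolding degree_in_def using \<open>finite U\<close> \<open>finite W\<close> by (intro card_mono) auto
  also have "\<dots> \<le> card ?NG + card ?NH"
    by (intro card_Un_le[THEN order_trans] add_mono card_image_le)
      (use \<open>finite U\<close> \<open>finite W\<close> in auto)
  also have "\<dots> \<le> k + l" using delete.hyps(2) delete.prems(3) unfolding degree_in_def by simp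
  finally have degree: "degree_in ?S ?T (Inl v, w) \<le> k + l" .
  have rest: "?S - {(Inl v, w)} = Inl ` (U - {v}) \<times> {w} \<union> Inl ` VG \<times> (W - {w})" by auto
  have remaining: "degenerate (k + l) ?T (?S - {(Inl v, w)})"
    unfolding rest by (rule delete.IH[OF delete.prems])
  show ?case by (rule degenerate.delete[OF _ degree remaining]) (use delete.hyps(1) in simp)
qed

lemma vertex_copies_degenerate:
  assumes "degenerate l EH W" and "degenerate k EG VG"
  shows "degenerate (k + l) (tsum_E VG EG VH EH) (Inl ` VG \<times> W)"
  using assms(1)
proof (induction rule: degenerate.induct)
  case empty
  then show ?case by (simp add: degenerate.empty)
next
  case (delete w W)
  have "finite W" using degenerate_finite[OF delete.hyps(3)] by simp
  have layers: "Inl ` VG \<times> W = Inl ` VG \<times> {w} \<union> Inl ` VG \<times> (W - {w})"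
    using delete.hyps(1) by auto
  show ?case unfolding layers
    by (rule vertex_copies_layer_degenerate[OF assms(2) \<open>finite W\<close> delete.hyps(1,2) delete.IH])
qed

theorem theorem4:
  fixes VG :: "'a set" and EG :: "'a set set" and VH :: "'b set" and EH :: "'b set set"
    and k l :: nat
  assumes "graph VG EG" and "graph VH EH"
    and "degenerate k EG VG" and "degenerate l EH VH"
  shows "degenerate (max (2 * max_degree VG EG) (k + l)) (tsum_E VG EG VH EH) (tsum_V VG EG VH EH)"
proof (rule degenerate_delete_set)
  let ?D = "max (2 * max_degree VG EG) (k + l)"
  show "finite (tsum_V VG EG VH EH)"
    using assms(1,2) graph_finite_edges[OF assms(1)]
    unfolding tsum_V_def total_V_def graph_def by simp
  show "Inr ` EG \<times> VH \<subseteq> tsum_V VG EG VH EH" unfolding tsum_V_def total_V_def by auto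
  show "\<forall>a\<in>Inr ` EG \<times> VH. degree_in (tsum_V VG EG VH EH) (tsum_E VG EG VH EH) a \<le> ?D"
    by (auto intro: le_trans[OF degree_edge_copy_le[OF assms(1)]])
  have "tsum_V VG EG VH EH - Inr ` EG \<times> VH = Inl ` VG \<times> VH"
    unfolding tsum_V_def total_V_def by auto
  then show "degenerate ?D (tsum_E VG EG VH EH) (tsum_V VG EG VH EH - Inr ` EG \<times> VH)"
    using degenerate_mono[OF vertex_copies_degenerate[OF assms(4,3)]] by simp
qed

end
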